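(* Every linear SEM-UR satisfying bottleneck faithfulness also satisfies SEM-UR faithfulness (parts (a), (b1), (b2)). The converse fails: there is a linear SEM-UR satisfying SEM-UR faithfulness but violating bottleneck faithfulness (e.g. three latent $H_1,H_2,H_3$, four observed $X_1,\dots,X_4$, $\mathbf A=\mathbf 0$ and $\mathbf B=\begin{bmatrix}0&1&-1\\2&2&0\\3&3&0\\4&0&4\end{bmatrix}$).
   Context: Linear SEM-UR: observed $X_1,\dots,X_q$, latent $H_1,\dots,H_l$, $H=N_H$, $X=\mathbf BH+\mathbf AX+N_X$, $\mathbf A$ strictly lower triangular, independent noises; the causal diagram is the DAG with edge $H_i\to X_j$ of weight $b_{ji}$ iff $b_{ji}\ne0$ and $X_k\to X_j$ of weight $a_{jk}$ iff $a_{jk}\ne0$. Mixing matrix $\mathbf W^{UR}=[(\mathbf I-\mathbf A)^{-1}\mathbf B\;\;(\mathbf I-\mathbf A)^{-1}]$; its $(X_j,N_V)$ entry is the total causal effect of $V$ on $X_j$ (sum over directed paths of products of weights; $1$ if $V=X_j$). Bottleneck faithfulness: for sets $\mathcal J\subseteq\mathcal H\cup\mathcal X$ and $\mathcal K\subseteq\mathcal X$, a bottleneck from $\mathcal J$ to $\mathcal K$ is a set of variables meeting every directed path from an element of $\mathcal J$ to an element of $\mathcal K$, and a minimal bottleneck is one of smallest size. The model satisfies bottleneck faithfulness if for all such $\mathcal J,\mathcal K$ the rank of the submatrix $\mathbf W^{\mathcal J}_{\mathcal K}$ of total causal effects from the variables of $\mathcal J$ to those of $\mathcal K$ equals the size of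 a minimal bottleneck from $\mathcal J$ to $\mathcal K$. $Pa,Ch,De$: parents, children, descendants ($De(V)$ excludes $V$). $\mathrm{TC}(V,\mathcal V)$: vector of total causal effects of $V$ on the elements of $\mathcal V$. Possible children of $V_i$: $De(V_i)$ together with all latent $H\neq V_i$ with $Ch(H)\subseteq De(V_i)$. SEM-UR faithfulness: (a) the total causal effect of any observed or latent variable on any of its descendants is nonzero; (b1) for each $V_i$, $\mathrm{TC}(V_i,De(V_i))$ is not in the span of any $k\le|Ch(V_i)|$ vectors of $\{\mathrm{TC}(V,De(V_i)):V$ a possible child of $V_i\}$, except when $k=|Ch(V_i)|$ and every latent $H_l$ among them has $Ch(H_l)\subseteq Ch(V_i)$; (b2) if $V_i$ is latent then for each child $X_j$, $\mathrm{TC}(V_i,De(V_i)\setminus\{X_j\})$ is not in the span of any $k\le|Ch(X_j)\cup Ch(V_i)|-1$ vectors of $\{\mathrm{TC}(V,De(V_i)\setminus\{X_j\}):V$ a possible child of $X_j\}$, except when $k=|Ch(X_j)\cup Ch(V_i)|-1$ and every latent $H_l$ among them has $Ch(H_l)\subseteq Ch(X_j)\cup Ch(V_i)$. *)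

theory Defs
  imports Complex_Main
begin

text \<open>Variables of a linear SEM-UR: latent H i (i < l) and observed X j (j < q),
  indexed from 0.\<close>
datatype var = H nat | X nat

text \<open>A linear SEM-UR with q observed and l latent variables is given by the
  coefficient matrices A (q x q, strictly lower triangular) and B (q x l):
  X = B H + A X + N_X, H = N_H.\<close>
definition sem_ur :: "nat \<Rightarrow> nat \<Rightarrow> (nat \<Rightarrow> nat \<Rightarrow> real) \<Rightarrow> (nat \<Rightarrow> nat \<Rightarrow> real) \<Rightarrow> bool" where
  "sem_ur q l A B \<longleftrightarrow>
     (\<forall>j k. A j k \<noteq> 0 \<longrightarrow> k < j \<and> j < q) \<and>
     (\<forall>j i. B j i \<noteq> 0 \<longrightarrow> j < q \<and> i < l)"

definition vars :: "nat \<Rightarrow> nat \<Rightarrow> var set" where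
  "vars q l = {H i | i. i < l} \<union> {X j | j. j < q}"

definition latents :: "nat \<Rightarrow> var set" where
  "latents l = {H i | i. i < l}"

definition observed :: "nat \<Rightarrow> var set" where
  "observed q = {X j | j. j < q}"

fun weight :: "(nat \<Rightarrow> nat \<Rightarrow> real) \<Rightarrow> (nat \<Rightarrow> nat \<Rightarrow> real) \<Rightarrow> var \<Rightarrow> var \<Rightarrow> real" where
  "weight A B (H i) (X j) = B j i"
| "weight A B (X k) (X j) = A j k"
| "weight A B _ _ = 0"

definition edge :: "(nat \<Rightarrow> nat \<Rightarrow> real) \<Rightarrow> (nat \<Rightarrow> nat \<Rightarrow> real) \<Rightarrow> var \<Rightarrow> var \<Rightarrow> bool" where
  "edge A B u v \<longleftrightarrow> weight A B u v \<noteq> 0"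

text \<open>Directed paths from u to v, as nonempty vertex lists (the one-vertex list
  [u] is the trivial path from u to u).\<close>
definition dpaths :: "(nat \<Rightarrow> nat \<Rightarrow> real) \<Rightarrow> (nat \<Rightarrow> nat \<Rightarrow> real) \<Rightarrow> var \<Rightarrow> var \<Rightarrow> var list set" where
  "dpaths A B u v = {p. p \<noteq> [] \<and> hd p = u \<and> last p = v \<and>
      (\<forall>i. Suc i < length p \<longrightarrow> edge A B (p ! i) (p ! Suc i))}"

text \<open>Total causal effect of u on v: sum over directed paths of the product of
  the edge weights (equal to 1 for u = v, via the trivial path).\<close>
definition te :: "(nat \<Rightarrow> nat \<Rightarrow> real) \<Rightarrow> (nat \<Rightarrow> nat \<Rightarrow> real) \<Rightarrow> var \<Rightarrow> var \<Rightarrow> real" where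
  "te A B u v = (\<Sum>p\<in>dpaths A B u v. \<Prod>i<length p - 1. weight A B (p ! i) (p ! Suc i))"

definition Ch :: "(nat \<Rightarrow> nat \<Rightarrow> real) \<Rightarrow> (nat \<Rightarrow> nat \<Rightarrow> real) \<Rightarrow> var \<Rightarrow> var set" where
  "Ch A B u = {v. edge A B u v}"

definition De :: "(nat \<Rightarrow> nat \<Rightarrow> real) \<Rightarrow> (nat \<Rightarrow> nat \<Rightarrow> real) \<Rightarrow> var \<Rightarrow> var set" where
  "De A B u = {v. v \<noteq> u \<and> dpaths A B u v \<noteq> {}}"

definition possible_children :: "nat \<Rightarrow> (nat \<Rightarrow> nat \<Rightarrow> real) \<Rightarrow> (nat \<Rightarrow> nat \<Rightarrow> real) \<Rightarrow> var \<Rightarrow> var set" where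
  "possible_children l A B u =
     De A B u \<union> {h. h \<in> latents l \<and> h \<noteq> u \<and> Ch A B h \<subseteq> De A B u}"

definition TC :: "(nat \<Rightarrow> nat \<Rightarrow> real) \<Rightarrow> (nat \<Rightarrow> nat \<Rightarrow> real) \<Rightarrow> var \<Rightarrow> var set \<Rightarrow> var \<Rightarrow> real" where
  "TC A B u S = (\<lambda>v. if v \<in> S then te A B u v else 0)"

definition in_span :: "(var \<Rightarrow> real) \<Rightarrow> var set \<Rightarrow> (var \<Rightarrow> var \<Rightarrow> real) \<Rightarrow> bool" where
  "in_span v S f \<longleftrightarrow> (\<exists>c. v = (\<lambda>w. \<Sum>s\<in>S. c s * f s w))"

definition bottleneck :: "(nat \<Rightarrow> nat \<Rightarrow> real) \<Rightarrow> (nat \<Rightarrow> nat \<Rightarrow> real) \<Rightarrow> var set \<Rightarrow> var set \<Rightarrow> var set \<Rightarrow> bool" where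
  "bottleneck A B J K S \<longleftrightarrow>
     (\<forall>u\<in>J. \<forall>v\<in>K. \<forall>p\<in>dpaths A B u v. set p \<inter> S \<noteq> {})"

definition min_bottleneck_size :: "nat \<Rightarrow> nat \<Rightarrow> (nat \<Rightarrow> nat \<Rightarrow> real) \<Rightarrow> (nat \<Rightarrow> nat \<Rightarrow> real) \<Rightarrow> var set \<Rightarrow> var set \<Rightarrow> nat" where
  "min_bottleneck_size q l A B J K =
     (LEAST n. \<exists>S. S \<subseteq> vars q l \<and> card S = n \<and> bottleneck A B J K S)"

definition cols_independent :: "(nat \<Rightarrow> nat \<Rightarrow> real) \<Rightarrow> (nat \<Rightarrow> nat \<Rightarrow> real) \<Rightarrow> var set \<Rightarrow> var set \<Rightarrow> bool" where
  "cols_independent A B J K \<longleftrightarrow>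
     (\<forall>c. (\<forall>v\<in>K. (\<Sum>u\<in>J. c u * te A B u v) = 0) \<longrightarrow> (\<forall>u\<in>J. c u = 0))"

definition rank_sub :: "(nat \<Rightarrow> nat \<Rightarrow> real) \<Rightarrow> (nat \<Rightarrow> nat \<Rightarrow> real) \<Rightarrow> var set \<Rightarrow> var set \<Rightarrow> nat" where
  "rank_sub A B J K = Max {card J' | J'. J' \<subseteq> J \<and> cols_independent A B J' K}"

definition bottleneck_faithful :: "nat \<Rightarrow> nat \<Rightarrow> (nat \<Rightarrow> nat \<Rightarrow> real) \<Rightarrow> (nat \<Rightarrow> nat \<Rightarrow> real) \<Rightarrow> bool" where
  "bottleneck_faithful q l A B \<longleftrightarrow>
     (\<forall>J K. J \<subseteq> vars q l \<longrightarrow> K \<subseteq> observed q \<longrightarrow>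
        rank_sub A B J K = min_bottleneck_size q l A B J K)"

definition faithful_a :: "nat \<Rightarrow> nat \<Rightarrow> (nat \<Rightarrow> nat \<Rightarrow> real) \<Rightarrow> (nat \<Rightarrow> nat \<Rightarrow> real) \<Rightarrow> bool" where
  "faithful_a q l A B \<longleftrightarrow>
     (\<forall>u\<in>vars q l. \<forall>v\<in>De A B u. te A B u v \<noteq> 0)"

definition faithful_b1 :: "nat \<Rightarrow> nat \<Rightarrow> (nat \<Rightarrow> nat \<Rightarrow> real) \<Rightarrow> (nat \<Rightarrow> nat \<Rightarrow> real) \<Rightarrow> bool" where
  "faithful_b1 q l A B \<longleftrightarrow>
     (\<forall>u\<in>vars q l. \<forall>S. S \<subseteq> possible_children l A B u \<longrightarrow>
        card S \<le> card (Ch A B u) \<longrightarrow>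
        \<not> (card S = card (Ch A B u) \<and>
             (\<forall>h\<in>S \<inter> latents l. Ch A B h \<subseteq> Ch A B u)) \<longrightarrow>
        \<not> in_span (TC A B u (De A B u)) S (\<lambda>s. TC A B s (De A B u)))"

definition faithful_b2 :: "nat \<Rightarrow> nat \<Rightarrow> (nat \<Rightarrow> nat \<Rightarrow> real) \<Rightarrow> (nat \<Rightarrow> nat \<Rightarrow> real) \<Rightarrow> bool" where
  "faithful_b2 q l A B \<longleftrightarrow>
     (\<forall>u\<in>latents l. \<forall>x\<in>Ch A B u. \<forall>S.
        S \<subseteq> possible_children l A B x \<longrightarrow>
        card S \<le> card (Ch A B x \<union> Ch A B u) - 1 \<longrightarrow>
        \<not> (card S = card (Ch A B x \<union> Ch A B u) - 1 \<and>
             (\<forall>h\<in>S \<inter> latents l. Ch A B h \<subseteq> Ch A B x \<union> Ch A B u)) \<longrightarrow>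
        \<not> in_span (TC A B u (De A B u - {x})) S (\<lambda>s. TC A B s (De A B u - {x})))"

definition semur_faithful :: "nat \<Rightarrow> nat \<Rightarrow> (nat \<Rightarrow> nat \<Rightarrow> real) \<Rightarrow> (nat \<Rightarrow> nat \<Rightarrow> real) \<Rightarrow> bool" where
  "semur_faithful q l A B \<longleftrightarrow> faithful_a q l A B \<and> faithful_b1 q l A B \<and> faithful_b2 q l A B"

end

theory Submission
  imports Defs
begin

text \<open>Under bottleneck faithfulness the rank of a matrix of total effects equals the size of a
  minimal bottleneck. Each clause (b1), (b2) says that the column of \<open>V\<^sub>i\<close> is not in the span of
  the columns of a small set \<open>S\<close> of possible children. A column in such a span cannot raise the
  rank, yet adding \<open>V\<^sub>i\<close> to \<open>S\<close> strictly raises the minimal bottleneck size: a minimal bottleneck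
  from \<open>S \<union> {V\<^sub>i}\<close> either contains a vertex through which no path from \<open>S\<close> passes, or it contains
  all children of \<open>V\<^sub>i\<close> (and of \<open>X\<^sub>j\<close>), and then the cardinality bound together with the
  excluded case leaves a latent in \<open>S\<close> whose edge escapes it. Clause (a) is the case of a single
  entry.\<close>

subsection \<open>Rank of submatrices of total causal effects\<close>

definition in_col_span ::
    "(nat \<Rightarrow> nat \<Rightarrow> real) \<Rightarrow> (nat \<Rightarrow> nat \<Rightarrow> real) \<Rightarrow> var set \<Rightarrow> var set \<Rightarrow> var \<Rightarrow> bool"
  where
  "in_col_span A B K S u \<longleftrightarrow> (\<exists>c. \<forall>v\<in>K. te A B u v = (\<Sum>s\<in>S. c s * te A B s v))"

lemma in_col_span_if_in_span:
  assumes "in_span (TC A B u K) S (\<lambda>s. TC A B s K)"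
  shows "in_col_span A B K S u"
proof -
  obtain c where c: "TC A B u K = (\<lambda>w. \<Sum>s\<in>S. c s * TC A B s K w)"
    using assms by (auto simp: in_span_def)
  have "te A B u v = (\<Sum>s\<in>S. c s * te A B s v)" if "v \<in> K" for v
    using fun_cong[OF c, of v] that by (simp add: TC_def)
  then show ?thesis
    unfolding in_col_span_def by blast
qed

lemma in_col_span_member:
  assumes "finite S" "s \<in> S"
  shows "in_col_span A B K S s"
  unfolding in_col_span_def
proof (intro exI ballI)
  fix v
  have "(\<Sum>t\<in>S. (if t = s then 1 else 0) * te A B t v) = (\<Sum>t\<in>S. if t = s then te A B t v else 0)"
    by (rule sum.cong) auto
  then show "te A B s v = (\<Sum>t\<in>S. (if t = s then 1 else 0) * te A B t v)"
    using assms by simp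
qed

lemma in_col_span_trans:
  assumes "in_col_span A B K S u" and "\<forall>s\<in>S. in_col_span A B K I s"
  shows "in_col_span A B K I u"
proof -
  obtain c where c: "\<forall>v\<in>K. te A B u v = (\<Sum>s\<in>S. c s * te A B s v)"
    using assms(1) by (auto simp: in_col_span_def)
  have "\<forall>s\<in>S. \<exists>d. \<forall>v\<in>K. te A B s v = (\<Sum>t\<in>I. d t * te A B t v)"
    using assms(2) by (simp add: in_col_span_def)
  then obtain d where d: "\<forall>s\<in>S. \<forall>v\<in>K. te A B s v = (\<Sum>t\<in>I. d s t * te A B t v)"
    by (rule bchoice[elim_format]) blast
  have "te A B u v = (\<Sum>t\<in>I. (\<Sum>s\<in>S. c s * d s t) * te A B t v)" if "v \<in> K" for v
  proof -
    have "te A B u v = (\<Sum>s\<in>S. c s * (\<Sum>t\<in>I. d s t * te A B t v))"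
      using c d that by simp
    also have "\<dots> = (\<Sum>t\<in>I. (\<Sum>s\<in>S. c s * d s t) * te A B t v)"
      by (simp add: sum_distrib_left sum_distrib_right sum.swap[of _ S] mult.assoc)
    finally show ?thesis .
  qed
  then show ?thesis
    by (auto simp: in_col_span_def intro!: exI[of _ "\<lambda>t. \<Sum>s\<in>S. c s * d s t"])
qed

lemma cols_independent_subset:
  assumes "finite J" "I \<subseteq> J" "cols_independent A B J K"
  shows "cols_independent A B I K"
  unfolding cols_independent_def
proof (intro allI impI)
  fix c assume c: "\<forall>v\<in>K. (\<Sum>u\<in>I. c u * te A B u v) = 0"
  define c' where "c' u = (if u \<in> I then c u else 0)" for u
  have "(\<Sum>u\<in>J. c' u * te A B u v) = (\<Sum>u\<in>I. c u * te A B u v)" for v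
  proof -
    have "(\<Sum>u\<in>J. c' u * te A B u v) = (\<Sum>u\<in>I. c' u * te A B u v)"
      using assms(1,2) by (intro sum.mono_neutral_right) (auto simp: c'_def)
    then show ?thesis
      by (simp add: c'_def)
  qed
  then have "\<forall>v\<in>K. (\<Sum>u\<in>J. c' u * te A B u v) = 0"
    using c by simp
  then have "\<forall>u\<in>J. c' u = 0"
    using assms(3) unfolding cols_independent_def by blast
  then show "\<forall>u\<in>I. c u = 0"
    using assms(2) unfolding c'_def by (metis subsetD)
qed

lemma in_col_span_if_dependent_insert:
  assumes "finite I" "cols_independent A B I K" "\<not> cols_independent A B (insert s I) K"
  shows "in_col_span A B K I s"
proof -
  have sI: "s \<notin> I"
    using assms(2,3) by (auto simp: insert_absorb)
  obtain c where c0: "\<forall>v\<in>K. c s * te A B s v + (\<Sum>u\<in>I. c u * te A B u v) = 0"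
    and c_nonzero: "\<exists>u\<in>insert s I. c u \<noteq> 0"
    using assms(1,3) sI unfolding cols_independent_def by auto
  have "c s \<noteq> 0"
  proof
    assume "c s = 0"
    then have "\<forall>u\<in>I. c u = 0"
      using c0 assms(2) unfolding cols_independent_def by simp
    then show False
      using c_nonzero \<open>c s = 0\<close> by auto
  qed
  then have "te A B s v = (\<Sum>t\<in>I. (- c t / c s) * te A B t v)" if "v \<in> K" for v
  proof -
    have "c s * te A B s v = - (\<Sum>u\<in>I. c u * te A B u v)"
      using c0 that by (simp add: eq_neg_iff_add_eq_0)
    then have "te A B s v = - (\<Sum>u\<in>I. c u * te A B u v) / c s"
      using \<open>c s \<noteq> 0\<close> by (simp add: field_simps)
    then show ?thesis
      by (simp add: sum_divide_distrib sum_negf)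
  qed
  then show ?thesis
    by (auto simp: in_col_span_def intro!: exI[of _ "\<lambda>t. - c t / c s"])
qed

lemma not_in_col_span_if_independent_insert:
  assumes "finite I" "u \<notin> I" "cols_independent A B (insert u I) K"
  shows "\<not> in_col_span A B K I u"
proof
  assume "in_col_span A B K I u"
  then obtain c where c: "\<forall>v\<in>K. te A B u v = (\<Sum>t\<in>I. c t * te A B t v)"
    by (auto simp: in_col_span_def)
  define e where "e t = (if t = u then 1 else - c t)" for t
  have "(\<Sum>t\<in>I. e t * te A B t v) = - (\<Sum>t\<in>I. c t * te A B t v)" for v
    using assms(2) by (auto simp: e_def sum_negf[symmetric] intro: sum.cong)
  then have "\<forall>v\<in>K. (\<Sum>t\<in>insert u I. e t * te A B t v) = 0"
    using assms(1,2) c by (simp add: e_def)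
  then have "e u = 0"
    using assms(3) unfolding cols_independent_def by blast
  then show False
    by (simp add: e_def)
qed

lemma finite_rank_candidates:
  assumes "finite J"
  shows "finite {card J' | J'. J' \<subseteq> J \<and> cols_independent A B J' K}"
proof (rule finite_subset)
  show "{card J' | J'. J' \<subseteq> J \<and> cols_independent A B J' K} \<subseteq> {..card J}"
    using assms by (auto intro: card_mono)
qed simp

lemma card_le_rank_sub:
  assumes "finite J" "J' \<subseteq> J" "cols_independent A B J' K"
  shows "card J' \<le> rank_sub A B J K"
  unfolding rank_sub_def using finite_rank_candidates[OF assms(1)] assms(2,3)
  by (intro Max_ge) blast+

lemma rank_sub_attained:
  assumes "finite J"
  shows "\<exists>J'. J' \<subseteq> J \<and> cols_independent A B J' K \<and> card J' = rank_sub A B J K"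
proof -
  have "cols_independent A B {} K"
    by (simp add: cols_independent_def)
  then have "{card J' | J'. J' \<subseteq> J \<and> cols_independent A B J' K} \<noteq> {}"
    by blast
  then have "rank_sub A B J K \<in> {card J' | J'. J' \<subseteq> J \<and> cols_independent A B J' K}"
    unfolding rank_sub_def using finite_rank_candidates[OF assms] by (rule Max_in[rotated])
  then show ?thesis
    by auto
qed

lemma rank_sub_less_card:
  assumes "finite J" "\<not> cols_independent A B J K"
  shows "rank_sub A B J K < card J"
proof -
  obtain J' where J': "J' \<subseteq> J" "cols_independent A B J' K" "card J' = rank_sub A B J K"
    using rank_sub_attained[OF assms(1)] by blast
  then have "J' \<subset> J"
    using assms(2) by blast
  from psubset_card_mono[OF assms(1) this] show ?thesis
    using J'(3) by simp
qed

text \<open>A column in the span of the columns of \<open>S\<close> does not raise the rank: a maximal independent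
  subset of \<open>insert u S\<close> containing \<open>u\<close> and of full size in \<open>S\<close> would span every column of \<open>S\<close>,
  hence also \<open>u\<close>.\<close>
lemma rank_sub_insert_le:
  assumes "finite S" "in_col_span A B K S u"
  shows "rank_sub A B (insert u S) K \<le> rank_sub A B S K"
proof -
  obtain J' where J': "J' \<subseteq> insert u S" "cols_independent A B J' K"
    "card J' = rank_sub A B (insert u S) K"
    using rank_sub_attained[of "insert u S" A B K] assms(1) by blast
  show ?thesis
  proof (cases "u \<in> J'")
    case False
    then have "J' \<subseteq> S"
      using J'(1) by blast
    then show ?thesis
      using card_le_rank_sub[OF assms(1) _ J'(2)] J'(3) by simp
  next
    case True
    define I where "I = J' - {u}"
    have IS: "I \<subseteq> S" and uI: "u \<notin> I"
      using J'(1) by (auto simp: I_def)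
    have finI: "finite I"
      using IS assms(1) finite_subset by blast
    have J'_eq: "J' = insert u I"
      using True by (auto simp: I_def)
    have indI: "cols_independent A B I K"
      using cols_independent_subset[OF _ _ J'(2)] J'_eq finI by auto
    have card_I: "card I \<le> rank_sub A B S K"
      using card_le_rank_sub[OF assms(1) IS indI] .
    have "card I \<noteq> rank_sub A B S K"
    proof
      assume full: "card I = rank_sub A B S K"
      have "in_col_span A B K I s" if "s \<in> S" for s
      proof (cases "s \<in> I")
        case True
        then show ?thesis
          using in_col_span_member[OF finI] by blast
      next
        case False
        have "\<not> cols_independent A B (insert s I) K"
        proof
          assume "cols_independent A B (insert s I) K"
          then have "card (insert s I) \<le> rank_sub A B S K"
            using card_le_rank_sub[OF assms(1)] IS that by blast
          then show False
            using False finI full by simp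
        qed
        then show ?thesis
          using in_col_span_if_dependent_insert[OF finI indI] by blast
      qed
      then have "in_col_span A B K I u"
        using in_col_span_trans[OF assms(2)] by blast
      then show False
        using not_in_col_span_if_independent_insert[OF finI uI] J'(2) J'_eq by blast
    qed
    then show ?thesis
      using J'(3) J'_eq card_I finI uI by simp
  qed
qed

subsection \<open>Paths in the causal diagram\<close>

text \<open>Latent variables precede all observed ones; since \<open>A\<close> is strictly lower triangular, every
  edge strictly increases this index.\<close>
fun topo_index :: "var \<Rightarrow> int" where
  "topo_index (H i) = -1"
| "topo_index (X j) = int j"

lemma edge_topo_index:
  assumes "sem_ur q l A B" "edge A B u v"
  shows "topo_index u < topo_index v \<and> v \<in> observed q"
  using assms by (cases u; cases v) (auto simp: edge_def sem_ur_def observed_def)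

lemma dpaths_nth_0: "p \<in> dpaths A B u v \<Longrightarrow> p ! 0 = u"
  by (auto simp: dpaths_def hd_conv_nth)

lemma dpaths_nth_last: "p \<in> dpaths A B u v \<Longrightarrow> p ! (length p - 1) = v"
  by (auto simp: dpaths_def last_conv_nth)

lemma dpaths_nonempty: "p \<in> dpaths A B u v \<Longrightarrow> p \<noteq> []"
  by (auto simp: dpaths_def)

lemma dpaths_edge_nth: "p \<in> dpaths A B u v \<Longrightarrow> Suc i < length p \<Longrightarrow> edge A B (p ! i) (p ! Suc i)"
  by (auto simp: dpaths_def)

lemma dpaths_refl: "[u] \<in> dpaths A B u u"
  by (auto simp: dpaths_def)

lemma dpaths_Cons:
  assumes "edge A B u w" "p \<in> dpaths A B w v"
  shows "u # p \<in> dpaths A B u v"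
proof -
  have "edge A B ((u # p) ! i) ((u # p) ! Suc i)" if "Suc i < length (u # p)" for i
    using assms dpaths_nth_0[OF assms(2)] dpaths_edge_nth[OF assms(2), of "i - 1"] that
    by (cases i) auto
  then show ?thesis
    using assms(2) dpaths_nonempty[OF assms(2)] by (auto simp: dpaths_def)
qed

lemma dpaths_edge: "edge A B u v \<Longrightarrow> [u, v] \<in> dpaths A B u v"
  using dpaths_Cons[OF _ dpaths_refl] .

lemma dpaths_topo_index_less:
  assumes "sem_ur q l A B" "p \<in> dpaths A B u v" "i < j" "j < length p"
  shows "topo_index (p ! i) < topo_index (p ! j)"
  using assms(3,4)
proof (induction j)
  case 0
  then show ?case by simp
next
  case (Suc j)
  have "topo_index (p ! j) < topo_index (p ! Suc j)"
    using edge_topo_index[OF assms(1) dpaths_edge_nth[OF assms(2)]] Suc.prems by blast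
  then show ?case
    using Suc by (cases "i = j") auto
qed

lemma dpaths_nth_observed:
  assumes "sem_ur q l A B" "p \<in> dpaths A B u v" "0 < i" "i < length p"
  shows "p ! i \<in> observed q"
  using edge_topo_index[OF assms(1) dpaths_edge_nth[OF assms(2), of "i - 1"]] assms(3,4) by simp

lemma De_topo_index:
  assumes "sem_ur q l A B" "v \<in> De A B u"
  shows "topo_index u < topo_index v \<and> v \<in> observed q"
proof -
  obtain p where p: "p \<in> dpaths A B u v" and "v \<noteq> u"
    using assms(2) by (auto simp: De_def)
  then have "0 < length p - 1"
    using dpaths_nth_0[OF p] dpaths_nth_last[OF p] dpaths_nonempty[OF p]
    by (cases "length p - 1") auto
  then show ?thesis
    using dpaths_topo_index_less[OF assms(1) p, of 0 "length p - 1"]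
      dpaths_nth_observed[OF assms(1) p, of "length p - 1"]
      dpaths_nth_0[OF p] dpaths_nth_last[OF p] by simp
qed

lemma De_subset_observed: "sem_ur q l A B \<Longrightarrow> De A B u \<subseteq> observed q"
  using De_topo_index by blast

lemma edge_imp_De: "sem_ur q l A B \<Longrightarrow> edge A B u v \<Longrightarrow> v \<in> De A B u"
  using edge_topo_index[of q l A B u v] dpaths_edge[of A B u v] by (auto simp: De_def)

lemma Ch_subset_De: "sem_ur q l A B \<Longrightarrow> Ch A B u \<subseteq> De A B u"
  using edge_imp_De by (auto simp: Ch_def)

lemma Ch_subset_observed: "sem_ur q l A B \<Longrightarrow> Ch A B u \<subseteq> observed q"
  using De_subset_observed Ch_subset_De by blast

lemma De_trans_edge:
  assumes "sem_ur q l A B" "edge A B u w" "v \<in> De A B w"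
  shows "v \<in> De A B u"
proof -
  obtain p where p: "p \<in> dpaths A B w v"
    using assms(3) by (auto simp: De_def)
  have "v \<noteq> u"
    using edge_topo_index[OF assms(1,2)] De_topo_index[OF assms(1,3)] by auto
  then show ?thesis
    using dpaths_Cons[OF assms(2) p] by (auto simp: De_def)
qed

lemma latents_disjoint_observed: "latents l \<inter> observed q = {}"
  by (auto simp: observed_def latents_def)

lemma finite_vars: "finite (vars q l)"
proof -
  have "vars q l = H ` {..<l} \<union> X ` {..<q}"
    by (auto simp: vars_def)
  then show ?thesis
    by simp
qed

lemma observed_subset_vars: "observed q \<subseteq> vars q l"
  by (auto simp: observed_def vars_def)

lemma latents_subset_vars: "latents l \<subseteq> vars q l"
  by (auto simp: latents_def vars_def)

lemma finite_Ch: "sem_ur q l A B \<Longrightarrow> finite (Ch A B u)"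
  using Ch_subset_observed observed_subset_vars finite_vars finite_subset by metis

lemma possible_children_subset_vars:
  "sem_ur q l A B \<Longrightarrow> possible_children l A B u \<subseteq> vars q l"
  using De_subset_observed observed_subset_vars latents_subset_vars
  by (fastforce simp: possible_children_def)

lemma Ch_latent_possible_child:
  assumes "sem_ur q l A B" "h \<in> latents l" "h \<in> possible_children l A B u"
  shows "Ch A B h \<subseteq> De A B u"
proof -
  have "h \<notin> De A B u"
    using assms(2) De_subset_observed[OF assms(1)] latents_disjoint_observed by blast
  then show ?thesis
    using assms(3) by (auto simp: possible_children_def)
qed

text \<open>A possible child \<open>s\<close> of \<open>x\<close> is either a descendant of \<open>x\<close> or has all its children among
  them; in both cases every path from \<open>s\<close> stays strictly after \<open>x\<close> in the topological order.\<close>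
lemma possible_child_path_avoids:
  assumes sem: "sem_ur q l A B" and s: "s \<in> possible_children l A B x"
    and p: "p \<in> dpaths A B s v"
  shows "x \<notin> set p"
proof
  assume "x \<in> set p"
  then obtain i where i: "i < length p" "p ! i = x"
    by (auto simp: in_set_conv_nth)
  have "s \<noteq> x"
    using s by (auto simp: possible_children_def De_def)
  then have "0 < i"
    using i dpaths_nth_0[OF p] by (cases i) auto
  show False
  proof (cases "s \<in> De A B x")
    case True
    then show False
      using De_topo_index[OF sem True] dpaths_topo_index_less[OF sem p, of 0 i] i \<open>0 < i\<close>
        dpaths_nth_0[OF p] by simp
  next
    case False
    then have "Ch A B s \<subseteq> De A B x"
      using s by (auto simp: possible_children_def)
    moreover have "p ! 1 \<in> Ch A B s"
      using dpaths_edge_nth[OF p, of 0] dpaths_nth_0[OF p] i \<open>0 < i\<close> by (simp add: Ch_def)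
    ultimately have "topo_index x < topo_index (p ! 1)"
      using De_topo_index[OF sem] by blast
    moreover have "topo_index (p ! 1) \<le> topo_index (p ! i)"
      using dpaths_topo_index_less[OF sem p, of 1 i] i \<open>0 < i\<close> by (cases "i = 1") auto
    ultimately show False
      using i by simp
  qed
qed

lemma latent_path_avoids:
  assumes "sem_ur q l A B" "u \<in> latents l" "s \<noteq> u" "p \<in> dpaths A B s v"
  shows "u \<notin> set p"
proof
  assume "u \<in> set p"
  then obtain i where i: "i < length p" "p ! i = u"
    by (auto simp: in_set_conv_nth)
  moreover have "0 < i"
    using i assms(3) dpaths_nth_0[OF assms(4)] by (cases i) auto
  ultimately show False
    using dpaths_nth_observed[OF assms(1,4)] assms(2) latents_disjoint_observed by blast
qed

lemma bottleneck_self: "bottleneck A B J K J"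
  by (auto simp: bottleneck_def dpaths_def) (metis list.set_sel(1) disjoint_iff)

lemma bottleneck_edge:
  assumes "bottleneck A B J K T" "u \<in> J" "v \<in> K" "edge A B u v"
  shows "u \<in> T \<or> v \<in> T"
proof -
  have "set [u, v] \<inter> T \<noteq> {}"
    using assms(1-3) dpaths_edge[OF assms(4)] unfolding bottleneck_def by blast
  then show ?thesis
    by auto
qed

lemma min_bottleneck_size_le:
  "T \<subseteq> vars q l \<Longrightarrow> bottleneck A B J K T \<Longrightarrow> min_bottleneck_size q l A B J K \<le> card T"
  unfolding min_bottleneck_size_def by (rule Least_le) blast

lemma min_bottleneck_size_attained:
  assumes "J \<subseteq> vars q l"
  shows "\<exists>T. T \<subseteq> vars q l \<and> card T = min_bottleneck_size q l A B J K \<and> bottleneck A B J K T"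
  unfolding min_bottleneck_size_def by (rule LeastI_ex) (use assms bottleneck_self in blast)

lemma min_bottleneck_size_pos:
  assumes "J \<subseteq> vars q l" "u \<in> J" "v \<in> K" "dpaths A B u v \<noteq> {}"
  shows "0 < min_bottleneck_size q l A B J K"
proof -
  obtain T where T: "T \<subseteq> vars q l" "card T = min_bottleneck_size q l A B J K"
    "bottleneck A B J K T"
    using min_bottleneck_size_attained[OF assms(1), of A B K] by auto
  have "T \<noteq> {}"
    using T(3) assms(2-4) by (auto simp: bottleneck_def)
  then show ?thesis
    using T(1,2) finite_vars finite_subset by fastforce
qed

text \<open>Let \<open>T\<close> be a minimal bottleneck from \<open>insert u S\<close> to \<open>K\<close>. If \<open>T\<close> meets \<open>Y\<close>, a set of
  vertices on no path from \<open>S\<close> to \<open>K\<close>, dropping that vertex leaves a smaller bottleneck from \<open>S\<close>.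
  Otherwise \<open>T\<close> contains \<open>D\<close>, and the only way for \<open>S\<close> to do as well is \<open>T = D\<close>, which
  the escaping path excludes.\<close>
lemma min_bottleneck_size_insert_less:
  assumes vars: "insert u S \<subseteq> vars q l"
    and card_le: "card S \<le> card D"
    and avoid: "\<forall>y\<in>Y. \<forall>s\<in>S. \<forall>v\<in>K. \<forall>p\<in>dpaths A B s v. y \<notin> set p"
    and forced: "\<And>T. bottleneck A B (insert u S) K T \<Longrightarrow> T \<inter> Y = {} \<Longrightarrow> D \<subseteq> T"
    and escape: "card S = card D \<Longrightarrow> \<exists>s\<in>S. \<exists>v\<in>K. \<exists>p\<in>dpaths A B s v. set p \<inter> D = {}"
  shows "min_bottleneck_size q l A B S K < min_bottleneck_size q l A B (insert u S) K"
proof -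
  obtain T where T: "T \<subseteq> vars q l" "card T = min_bottleneck_size q l A B (insert u S) K"
    "bottleneck A B (insert u S) K T"
    using min_bottleneck_size_attained[OF vars, of A B K] by auto
  have finT: "finite T"
    using T(1) finite_vars finite_subset by blast
  have mb_S: "min_bottleneck_size q l A B S K \<le> card S"
    using min_bottleneck_size_le[OF _ bottleneck_self] vars by blast
  show ?thesis
  proof (cases "T \<inter> Y = {}")
    case False
    then obtain y where y: "y \<in> T" "y \<in> Y"
      by blast
    have "bottleneck A B S K (T - {y})"
      using T(3) avoid y(2) unfolding bottleneck_def by blast
    then have "min_bottleneck_size q l A B S K \<le> card (T - {y})"
      using min_bottleneck_size_le T(1) by blast
    then show ?thesis
      using card_Diff1_less[OF finT y(1)] T(2) by linarith
  next
    case True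
    then have DT: "D \<subseteq> T"
      using forced T(3) by blast
    have card_DT: "card D \<le> card T"
      using card_mono[OF finT DT] .
    show ?thesis
    proof (rule ccontr)
      assume "\<not> ?thesis"
      then have "card S = card D" "card D = card T"
        using mb_S card_le card_DT T(2) by linarith+
      moreover have "D = T"
        using card_subset_eq[OF finT DT] calculation(2) by simp
      ultimately obtain s v p where "s \<in> S" "v \<in> K" "p \<in> dpaths A B s v" "set p \<inter> T = {}"
        using escape by blast
      then show False
        using T(3) unfolding bottleneck_def by blast
    qed
  qed
qed

lemma rank_sub_eq_min_bottleneck_size:
  "bottleneck_faithful q l A B \<Longrightarrow> J \<subseteq> vars q l \<Longrightarrow> K \<subseteq> observed q
    \<Longrightarrow> rank_sub A B J K = min_bottleneck_size q l A B J K"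
  by (simp add: bottleneck_faithful_def)

lemma not_in_span_if_min_bottleneck_size_less:
  assumes bf: "bottleneck_faithful q l A B"
    and vars: "insert u S \<subseteq> vars q l" and K: "K \<subseteq> observed q"
    and less: "min_bottleneck_size q l A B S K < min_bottleneck_size q l A B (insert u S) K"
  shows "\<not> in_span (TC A B u K) S (\<lambda>s. TC A B s K)"
proof
  assume span: "in_span (TC A B u K) S (\<lambda>s. TC A B s K)"
  have S: "S \<subseteq> vars q l"
    using vars by simp
  then have "finite S"
    using finite_vars by (rule finite_subset)
  then have "rank_sub A B (insert u S) K \<le> rank_sub A B S K"
    using in_col_span_if_in_span[OF span] by (rule rank_sub_insert_le)
  moreover have "rank_sub A B S K = min_bottleneck_size q l A B S K"
    using rank_sub_eq_min_bottleneck_size[OF bf S K] .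
  moreover have "rank_sub A B (insert u S) K = min_bottleneck_size q l A B (insert u S) K"
    using rank_sub_eq_min_bottleneck_size[OF bf vars K] .
  ultimately show False
    using less by simp
qed

lemma faithful_a_if_bottleneck_faithful:
  assumes sem: "sem_ur q l A B" and bf: "bottleneck_faithful q l A B"
  shows "faithful_a q l A B"
  unfolding faithful_a_def
proof (intro ballI notI)
  fix u v
  assume u: "u \<in> vars q l" and v: "v \<in> De A B u" and te0: "te A B u v = 0"
  have "\<not> cols_independent A B {u} {v}"
  proof
    assume "cols_independent A B {u} {v}"
    from this[unfolded cols_independent_def, rule_format, of "\<lambda>_. 1"] te0 show False
      by simp
  qed
  then have "rank_sub A B {u} {v} = 0"
    using rank_sub_less_card[of "{u}"] by simp
  moreover have "{v} \<subseteq> observed q"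
    using v De_subset_observed[OF sem] by blast
  then have "rank_sub A B {u} {v} = min_bottleneck_size q l A B {u} {v}"
    using rank_sub_eq_min_bottleneck_size[OF bf] u by simp
  moreover have "0 < min_bottleneck_size q l A B {u} {v}"
    using min_bottleneck_size_pos[of "{u}" q l u v] u v by (auto simp: De_def)
  ultimately show False
    by simp
qed

lemma faithful_b1_if_bottleneck_faithful:
  assumes sem: "sem_ur q l A B" and bf: "bottleneck_faithful q l A B"
  shows "faithful_b1 q l A B"
  unfolding faithful_b1_def
proof (intro ballI allI impI)
  fix u S
  assume u: "u \<in> vars q l" and S: "S \<subseteq> possible_children l A B u"
    and card_S: "card S \<le> card (Ch A B u)"
    and not_equal_case: "\<not> (card S = card (Ch A B u) \<and> (\<forall>h\<in>S \<inter> latents l. Ch A B h \<subseteq> Ch A B u))"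
  have vars: "insert u S \<subseteq> vars q l"
    using u S possible_children_subset_vars[OF sem] by blast
  show "\<not> in_span (TC A B u (De A B u)) S (\<lambda>s. TC A B s (De A B u))"
  proof (rule not_in_span_if_min_bottleneck_size_less[OF bf vars De_subset_observed[OF sem]])
    show "min_bottleneck_size q l A B S (De A B u)
      < min_bottleneck_size q l A B (insert u S) (De A B u)"
    proof (rule min_bottleneck_size_insert_less[OF vars card_S, where Y = "{u}"])
      show "\<forall>y\<in>{u}. \<forall>s\<in>S. \<forall>v\<in>De A B u. \<forall>p\<in>dpaths A B s v. y \<notin> set p"
        using possible_child_path_avoids[OF sem] S by blast
      show "Ch A B u \<subseteq> T" if "bottleneck A B (insert u S) (De A B u) T" "T \<inter> {u} = {}" for T
        using bottleneck_edge[OF that(1)] that(2) Ch_subset_De[OF sem] by (auto simp: Ch_def)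
      assume "card S = card (Ch A B u)"
      then obtain h c where h: "h \<in> S" "h \<in> latents l" and c: "c \<in> Ch A B h" "c \<notin> Ch A B u"
        using not_equal_case by blast
      have "c \<in> De A B u"
        using Ch_latent_possible_child[OF sem h(2)] h(1) S c(1) by blast
      moreover have "h \<notin> Ch A B u"
        using h(2) Ch_subset_observed[OF sem] latents_disjoint_observed by blast
      then have "set [h, c] \<inter> Ch A B u = {}"
        using c(2) by simp
      moreover have "[h, c] \<in> dpaths A B h c"
        using c(1) dpaths_edge by (simp add: Ch_def)
      ultimately show "\<exists>s\<in>S. \<exists>v\<in>De A B u. \<exists>p\<in>dpaths A B s v. set p \<inter> Ch A B u = {}"
        using h(1) by blast
    qed
  qed
qed

lemma faithful_b2_if_bottleneck_faithful:
  assumes sem: "sem_ur q l A B" and bf: "bottleneck_faithful q l A B"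
  shows "faithful_b2 q l A B"
  unfolding faithful_b2_def
proof (intro ballI allI impI)
  fix u x S
  assume u: "u \<in> latents l" and x: "x \<in> Ch A B u" and S: "S \<subseteq> possible_children l A B x"
    and card_S: "card S \<le> card (Ch A B x \<union> Ch A B u) - 1"
    and not_equal_case: "\<not> (card S = card (Ch A B x \<union> Ch A B u) - 1 \<and>
      (\<forall>h\<in>S \<inter> latents l. Ch A B h \<subseteq> Ch A B x \<union> Ch A B u))"
  define K where "K = De A B u - {x}"
  define D where "D = Ch A B x \<union> Ch A B u - {x}"
  have ux: "edge A B u x"
    using x by (simp add: Ch_def)
  have vars: "insert u S \<subseteq> vars q l"
    using u S possible_children_subset_vars[OF sem] latents_subset_vars by blast
  have uS: "u \<notin> S"
    using Ch_latent_possible_child[OF sem u] S x by (auto simp: De_def)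
  have card_D: "card D = card (Ch A B x \<union> Ch A B u) - 1"
    using x finite_Ch[OF sem] by (simp add: D_def card_Diff_singleton)
  have "K \<subseteq> observed q"
    using De_subset_observed[OF sem] by (auto simp: K_def)
  then show "\<not> in_span (TC A B u (De A B u - {x})) S (\<lambda>s. TC A B s (De A B u - {x}))"
    unfolding K_def[symmetric]
  proof (rule not_in_span_if_min_bottleneck_size_less[OF bf vars])
    show "min_bottleneck_size q l A B S K < min_bottleneck_size q l A B (insert u S) K"
    proof (rule min_bottleneck_size_insert_less[OF vars, where Y = "{u, x}" and D = D])
      show "card S \<le> card D"
        using card_S card_D by simp
      show "\<forall>y\<in>{u, x}. \<forall>s\<in>S. \<forall>v\<in>K. \<forall>p\<in>dpaths A B s v. y \<notin> set p"
        using latent_path_avoids[OF sem u] possible_child_path_avoids[OF sem] S uS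
        by (metis empty_iff insert_iff subsetD)
      show "D \<subseteq> T" if T: "bottleneck A B (insert u S) K T" "T \<inter> {u, x} = {}" for T
      proof
        fix c assume c: "c \<in> D"
        show "c \<in> T"
        proof (cases "c \<in> Ch A B u")
          case True
          then have "c \<in> K"
            using c Ch_subset_De[OF sem] by (auto simp: K_def D_def)
          then show ?thesis
            using bottleneck_edge[OF T(1), of u c] T(2) True by (auto simp: Ch_def)
        next
          case False
          then have xc: "edge A B x c" "c \<noteq> x"
            using c by (auto simp: D_def Ch_def)
          then have "c \<in> K"
            using De_trans_edge[OF sem ux edge_imp_De[OF sem]] by (simp add: K_def)
          moreover have "[u, x, c] \<in> dpaths A B u c"
            using dpaths_Cons[OF ux dpaths_edge[OF xc(1)]] .
          ultimately have "set [u, x, c] \<inter> T \<noteq> {}"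
            using T(1) unfolding bottleneck_def by blast
          then show ?thesis
            using T(2) by auto
        qed
      qed
      assume "card S = card D"
      then have "\<not> (\<forall>h\<in>S \<inter> latents l. Ch A B h \<subseteq> Ch A B x \<union> Ch A B u)"
        using not_equal_case card_D by simp
      then obtain h c where h: "h \<in> S" "h \<in> latents l"
        and c: "c \<in> Ch A B h" "c \<notin> Ch A B x \<union> Ch A B u"
        by blast
      have "c \<in> De A B x"
        using Ch_latent_possible_child[OF sem h(2)] h(1) S c(1) by blast
      then have "c \<in> K"
        using De_trans_edge[OF sem ux] by (auto simp: K_def De_def)
      moreover have "h \<notin> D"
        using h(2) Ch_subset_observed[OF sem] latents_disjoint_observed unfolding D_def by blast
      then have "set [h, c] \<inter> D = {}"
        using c(2) by (simp add: D_def)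
      moreover have "[h, c] \<in> dpaths A B h c"
        using c(1) dpaths_edge by (simp add: Ch_def)
      ultimately show "\<exists>s\<in>S. \<exists>v\<in>K. \<exists>p\<in>dpaths A B s v. set p \<inter> D = {}"
        using h(1) by blast
    qed
  qed
qed

lemma semur_faithful_if_bottleneck_faithful:
  "sem_ur q l A B \<Longrightarrow> bottleneck_faithful q l A B \<Longrightarrow> semur_faithful q l A B"
  using faithful_a_if_bottleneck_faithful faithful_b1_if_bottleneck_faithful
    faithful_b2_if_bottleneck_faithful
  by (simp add: semur_faithful_def)

subsection \<open>Models without edges between observed variables\<close>

abbreviation zero_mat :: "nat \<Rightarrow> nat \<Rightarrow> real" where
  "zero_mat \<equiv> \<lambda>_ _. 0"

lemma edge_zero_mat: "edge zero_mat B u v \<longleftrightarrow> (\<exists>i j. u = H i \<and> v = X j \<and> B j i \<noteq> 0)"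
  by (cases u; cases v) (auto simp: edge_def)

lemma dpaths_zero_mat:
  "dpaths zero_mat B u v = (if u = v then {[u]} else if edge zero_mat B u v then {[u, v]} else {})"
proof -
  have "p = [u] \<and> u = v \<or> p = [u, v] \<and> edge zero_mat B u v" if p: "p \<in> dpaths zero_mat B u v" for p
  proof -
    obtain rest where p_eq: "p = u # rest"
      using dpaths_nonempty[OF p] dpaths_nth_0[OF p] by (cases p) auto
    have no_two_edges: "\<not> (edge zero_mat B a b \<and> edge zero_mat B b c)" for a b c
      by (auto simp: edge_zero_mat)
    have "length p \<le> 2"
    proof (rule ccontr)
      assume "\<not> length p \<le> 2"
      then show False
        using dpaths_edge_nth[OF p, of 0] dpaths_edge_nth[OF p, of 1] no_two_edges by auto
    qed
    then show ?thesis
      using p p_eq dpaths_edge_nth[OF p, of 0] dpaths_nth_last[OF p]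
      by (cases rest) (auto simp: le_Suc_eq)
  qed
  moreover have "\<not> edge zero_mat B u u"
    by (auto simp: edge_zero_mat)
  ultimately show ?thesis
    using dpaths_refl[of u zero_mat B] dpaths_edge[of zero_mat B u v] by auto
qed

lemma te_zero_mat: "te zero_mat B u v = (if u = v then 1 else weight zero_mat B u v)"
  by (auto simp: te_def dpaths_zero_mat edge_def)

lemma De_zero_mat: "De zero_mat B u = Ch zero_mat B u"
  by (auto simp: De_def Ch_def dpaths_zero_mat edge_zero_mat)

lemma Ch_X_zero_mat: "Ch zero_mat B (X j) = {}"
  by (auto simp: Ch_def edge_zero_mat)

lemma not_in_span_if_coordinate:
  assumes "v w \<noteq> 0" "\<forall>s\<in>S. f s w = 0"
  shows "\<not> in_span v S f"
  using assms by (auto simp: in_span_def)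

text \<open>Descendants are children here, so the hypotheses force every possible child of \<open>u\<close> to be a
  child of \<open>u\<close> and leave a child of \<open>u\<close> outside \<open>S\<close>, where the column of \<open>u\<close> is nonzero and
  all columns of \<open>S\<close> vanish.\<close>
lemma semur_faithful_if_zero_mat:
  assumes sem: "sem_ur q l zero_mat B"
    and Ch_not_subset: "\<forall>i k. i < l \<longrightarrow> k < l \<longrightarrow> i \<noteq> k \<longrightarrow>
      \<not> Ch zero_mat B (H k) \<subseteq> Ch zero_mat B (H i)"
    and two_children: "\<forall>i<l. 2 \<le> card (Ch zero_mat B (H i))"
  shows "semur_faithful q l zero_mat B"
proof -
  have "faithful_a q l zero_mat B"
    unfolding faithful_a_def
    by (auto simp: De_zero_mat Ch_def edge_zero_mat te_zero_mat)
  moreover have "faithful_b1 q l zero_mat B"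
    unfolding faithful_b1_def
  proof (intro ballI allI impI)
    fix u S
    assume u: "u \<in> vars q l" and S: "S \<subseteq> possible_children l zero_mat B u"
      and card_S: "card S \<le> card (Ch zero_mat B u)"
      and not_equal_case: "\<not> (card S = card (Ch zero_mat B u) \<and>
        (\<forall>h\<in>S \<inter> latents l. Ch zero_mat B h \<subseteq> Ch zero_mat B u))"
    have S_Ch: "S \<subseteq> Ch zero_mat B u"
    proof (cases u)
      case (X j)
      have "S \<subseteq> vars q l"
        using S possible_children_subset_vars[OF sem] by blast
      then have "finite S"
        using finite_vars by (rule finite_subset)
      then show ?thesis
        using card_S by (simp add: X Ch_X_zero_mat)
    next
      case (H i)
      have i: "i < l"
        using u H by (auto simp: vars_def)
      show ?thesis
      proof
        fix s assume s: "s \<in> S"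
        show "s \<in> Ch zero_mat B u"
        proof (rule ccontr)
          assume "s \<notin> Ch zero_mat B u"
          moreover have "s \<in> possible_children l zero_mat B u"
            using s S by blast
          ultimately obtain k where "s = H k" "k < l" "k \<noteq> i"
            "Ch zero_mat B s \<subseteq> Ch zero_mat B u"
            by (auto simp: possible_children_def De_zero_mat latents_def H)
          then show False
            using Ch_not_subset i H by blast
        qed
      qed
    qed
    then have "S \<inter> latents l = {}"
      using Ch_subset_observed[OF sem] latents_disjoint_observed by blast
    then have "S \<noteq> Ch zero_mat B u"
      using not_equal_case by auto
    then obtain w where w: "w \<in> Ch zero_mat B u" "w \<notin> S"
      using S_Ch by blast
    show "\<not> in_span (TC zero_mat B u (De zero_mat B u)) S (\<lambda>s. TC zero_mat B s (De zero_mat B u))"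
    proof (rule not_in_span_if_coordinate)
      show "TC zero_mat B u (De zero_mat B u) w \<noteq> 0"
        using w by (auto simp: TC_def De_zero_mat te_zero_mat Ch_def edge_zero_mat)
      show "\<forall>s\<in>S. TC zero_mat B s (De zero_mat B u) w = 0"
        using w S_Ch by (auto simp: TC_def te_zero_mat Ch_def edge_zero_mat)
    qed
  qed
  moreover have "faithful_b2 q l zero_mat B"
    unfolding faithful_b2_def
  proof (intro ballI allI impI)
    fix u x S
    assume u: "u \<in> latents l" and x: "x \<in> Ch zero_mat B u"
      and S: "S \<subseteq> possible_children l zero_mat B x"
    obtain i where i: "u = H i" "i < l"
      using u by (auto simp: latents_def)
    obtain j where j: "x = X j"
      using x i by (auto simp: Ch_def edge_zero_mat)
    have "Ch zero_mat B h \<noteq> {}" if "h \<in> latents l" for h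
      using that two_children by (fastforce simp: latents_def)
    then have S_empty: "S = {}"
      using S by (auto simp: possible_children_def De_zero_mat j Ch_X_zero_mat)
    have "\<not> Ch zero_mat B u \<subseteq> {x}"
      using two_children i card_mono[of "{x}" "Ch zero_mat B u"] by fastforce
    then obtain w where w: "w \<in> Ch zero_mat B u" "w \<noteq> x"
      by blast
    show "\<not> in_span (TC zero_mat B u (De zero_mat B u - {x})) S
      (\<lambda>s. TC zero_mat B s (De zero_mat B u - {x}))"
    proof (rule not_in_span_if_coordinate)
      show "TC zero_mat B u (De zero_mat B u - {x}) w \<noteq> 0"
        using w by (auto simp: TC_def De_zero_mat te_zero_mat Ch_def edge_zero_mat)
      show "\<forall>s\<in>S. TC zero_mat B s (De zero_mat B u - {x}) w = 0"
        using S_empty by simp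
    qed
  qed
  ultimately show ?thesis
    by (simp add: semur_faithful_def)
qed

subsection \<open>The counterexample\<close>

definition B_counterexample :: "nat \<Rightarrow> nat \<Rightarrow> real" where
  "B_counterexample j i =
     (if j < 4 \<and> i < 3 then [[0, 1, -1], [2, 2, 0], [3, 3, 0], [4, 0, 4]] ! j ! i else 0)"

lemma less_3_cases: "(i::nat) < 3 \<longleftrightarrow> i = 0 \<or> i = 1 \<or> i = 2"
  by auto

lemma less_4_cases: "(j::nat) < 4 \<longleftrightarrow> j = 0 \<or> j = 1 \<or> j = 2 \<or> j = 3"
  by auto

lemma B_counterexample_nonzero:
  "B_counterexample j i \<noteq> 0 \<longleftrightarrow>
     (j, i) \<in> {(0, 1), (0, 2), (1, 0), (1, 1), (2, 0), (2, 1), (3, 0), (3, 2)}"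
proof (cases "j < 4 \<and> i < 3")
  case True
  then show ?thesis
    unfolding less_3_cases less_4_cases
    by (elim conjE disjE) (simp_all add: B_counterexample_def)
qed (auto simp: B_counterexample_def)

lemma sem_ur_counterexample: "sem_ur 4 3 zero_mat B_counterexample"
  by (auto simp: sem_ur_def B_counterexample_nonzero)

lemma Ch_counterexample:
  "Ch zero_mat B_counterexample (H 0) = {X 1, X 2, X 3}"
  "Ch zero_mat B_counterexample (H 1) = {X 0, X 1, X 2}"
  "Ch zero_mat B_counterexample (H 2) = {X 0, X 3}"
  by (auto simp: Ch_def edge_zero_mat B_counterexample_nonzero)

lemma semur_faithful_counterexample: "semur_faithful 4 3 zero_mat B_counterexample"
  by (rule semur_faithful_if_zero_mat[OF sem_ur_counterexample])
    (auto simp: less_3_cases Ch_counterexample Ch_counterexample(2)[unfolded One_nat_def])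

lemma latents_3: "latents 3 = {H 0, H 1, H 2}"
  by (auto simp: latents_def less_3_cases)

lemma observed_4: "observed 4 = {X 0, X 1, X 2, X 3}"
  by (auto simp: observed_def less_4_cases)

text \<open>The columns of the three latent variables satisfy \<open>H\<^sub>0 = H\<^sub>1 + H\<^sub>2\<close>, so they have rank 2,
  but the edges \<open>H\<^sub>0 \<rightarrow> X\<^sub>1\<close>, \<open>H\<^sub>1 \<rightarrow> X\<^sub>0\<close>, \<open>H\<^sub>2 \<rightarrow> X\<^sub>3\<close> are pairwise disjoint, so every bottleneck
  has at least three elements.\<close>
lemma not_bottleneck_faithful_counterexample: "\<not> bottleneck_faithful 4 3 zero_mat B_counterexample"
proof
  assume bf: "bottleneck_faithful 4 3 zero_mat B_counterexample"
  let ?J = "latents 3" and ?K = "observed 4"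
  have "\<not> cols_independent zero_mat B_counterexample ?J ?K"
  proof
    assume independent: "cols_independent zero_mat B_counterexample ?J ?K"
    define c :: "var \<Rightarrow> real" where "c v = (if v = H 0 then 1 else -1)" for v
    have "\<forall>w\<in>?K. (\<Sum>u\<in>?J. c u * te zero_mat B_counterexample u w) = 0"
      by (simp add: latents_3 observed_4 c_def te_zero_mat B_counterexample_def)
    then have "c (H 1) = 0"
      using independent unfolding cols_independent_def latents_3 by blast
    then show False
      by (simp add: c_def)
  qed
  then have "rank_sub zero_mat B_counterexample ?J ?K < card ?J"
    by (intro rank_sub_less_card) (simp add: latents_3)
  then have rank_less: "rank_sub zero_mat B_counterexample ?J ?K < 3"
    by (simp add: latents_3)
  have "?J \<subseteq> vars 4 3"
    by (rule latents_subset_vars)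
  from min_bottleneck_size_attained[OF this, of zero_mat B_counterexample ?K]
  obtain T where T: "T \<subseteq> vars 4 3"
    "card T = min_bottleneck_size 4 3 zero_mat B_counterexample ?J ?K"
    "bottleneck zero_mat B_counterexample ?J ?K T"
    by (elim exE conjE)
  have meets: "H i \<in> T \<or> X j \<in> T" if "B_counterexample j i \<noteq> 0" "i < 3" "j < 4" for i j
    using bottleneck_edge[OF T(3), of "H i" "X j"] that
    by (simp add: latents_def observed_def edge_zero_mat)
  obtain a where a: "a \<in> T" "a \<in> {H 0, X 1}"
    using meets[where i = 0 and j = 1] by (auto simp: B_counterexample_def)
  obtain b where b: "b \<in> T" "b \<in> {H 1, X 0}"
    using meets[where i = 1 and j = 0] by (auto simp: B_counterexample_def)
  obtain c where c: "c \<in> T" "c \<in> {H 2, X 3}"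
    using meets[where i = 2 and j = 3] by (auto simp: B_counterexample_def)
  have "finite T"
    using T(1) finite_vars by (rule finite_subset)
  then have "card {a, b, c} \<le> card T"
    using a b c by (intro card_mono) auto
  moreover have "card {a, b, c} = 3"
    using a(2) b(2) c(2) by auto
  moreover have "rank_sub zero_mat B_counterexample ?J ?K
      = min_bottleneck_size 4 3 zero_mat B_counterexample ?J ?K"
    using rank_sub_eq_min_bottleneck_size[OF bf latents_subset_vars] by simp
  ultimately show False
    using T(2) rank_less by simp
qed

theorem mainTheorem14:
  shows "(\<forall>q l A B. sem_ur q l A B \<longrightarrow> bottleneck_faithful q l A B \<longrightarrow> semur_faithful q l A B)
     \<and> (\<exists>q l A B. sem_ur q l A B \<and> semur_faithful q l A B \<and> \<not> bottleneck_faithful q l A B)"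
  using semur_faithful_if_bottleneck_faithful sem_ur_counterexample semur_faithful_counterexample
    not_bottleneck_faithful_counterexample
  by blast

end
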